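(* Let $H$ be a commutative Hopf algebra over a field $k$ with counit $\varepsilon$, and let $B$ be a Rota-Baxter co-operator on $H$. Then $\varepsilon\circ B=\varepsilon$.
   Context: Sweedler notation $\Delta(x)=x_1\otimes x_2$, iterated as $x_1\otimes x_2\otimes x_3\otimes x_4$. A Rota-Baxter co-operator on a commutative Hopf algebra $(H,S)$ is an algebra map $B:H\to H$ such that for all $x\in H$: $B(x_1)\otimes B(x_2)=B(x)_1\,B\big(B(x)_2S(B(x)_4)\big)\otimes B(x)_3$, where $B(x)_1\otimes B(x)_2\otimes B(x)_3\otimes B(x)_4$ denotes the threefold iterated coproduct of $B(x)$. *)

theory Defs
  imports Main "HOL.Vector_Spaces"
begin

text \<open>Elements of tensor powers of a k-vector space H are represented by formal
sums (lists of elementary tensors).  Two formal sums denote the same element of the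
tensor power iff they agree under every multilinear form H x ... x H -> k
(the canonical map from the tensor power to the dual of the space of multilinear
forms is injective over a field).\<close>

definition bilinear_form :: "('k::field \<Rightarrow> 'h::ab_group_add \<Rightarrow> 'h) \<Rightarrow> ('h \<Rightarrow> 'h \<Rightarrow> 'k) \<Rightarrow> bool" where
  "bilinear_form sc \<beta> \<longleftrightarrow>
     (\<forall>a. Vector_Spaces.linear sc (*) (\<lambda>b. \<beta> a b)) \<and>
     (\<forall>b. Vector_Spaces.linear sc (*) (\<lambda>a. \<beta> a b))"

definition trilinear_form :: "('k::field \<Rightarrow> 'h::ab_group_add \<Rightarrow> 'h) \<Rightarrow> ('h \<Rightarrow> 'h \<Rightarrow> 'h \<Rightarrow> 'k) \<Rightarrow> bool" where
  "trilinear_form sc \<tau> \<longleftrightarrow>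
     (\<forall>b c. Vector_Spaces.linear sc (*) (\<lambda>a. \<tau> a b c)) \<and>
     (\<forall>a c. Vector_Spaces.linear sc (*) (\<lambda>b. \<tau> a b c)) \<and>
     (\<forall>a b. Vector_Spaces.linear sc (*) (\<lambda>c. \<tau> a b c))"

definition tensor2_eq :: "('k::field \<Rightarrow> 'h::ab_group_add \<Rightarrow> 'h) \<Rightarrow> ('h \<times> 'h) list \<Rightarrow> ('h \<times> 'h) list \<Rightarrow> bool" where
  "tensor2_eq sc xs ys \<longleftrightarrow>
     (\<forall>\<beta>. bilinear_form sc \<beta> \<longrightarrow>
        sum_list (map (\<lambda>(a, b). \<beta> a b) xs) = sum_list (map (\<lambda>(a, b). \<beta> a b) ys))"

definition tensor3_eq :: "('k::field \<Rightarrow> 'h::ab_group_add \<Rightarrow> 'h) \<Rightarrow> ('h \<times> 'h \<times> 'h) list \<Rightarrow> ('h \<times> 'h \<times> 'h) list \<Rightarrow> bool" where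
  "tensor3_eq sc xs ys \<longleftrightarrow>
     (\<forall>\<tau>. trilinear_form sc \<tau> \<longrightarrow>
        sum_list (map (\<lambda>(a, b, c). \<tau> a b c) xs) = sum_list (map (\<lambda>(a, b, c). \<tau> a b c) ys))"

text \<open>Threefold iterated coproduct x_1 \<otimes> x_2 \<otimes> x_3 \<otimes> x_4, computed as
(\<Delta> \<otimes> id \<otimes> id)(\<Delta> \<otimes> id)\<Delta> on the chosen representatives.\<close>
definition iter_coprod3 :: "('h \<Rightarrow> ('h \<times> 'h) list) \<Rightarrow> 'h \<Rightarrow> ('h \<times> 'h \<times> 'h \<times> 'h) list" where
  "iter_coprod3 \<Delta> x =
     concat (map (\<lambda>(a, b). concat (map (\<lambda>(c, d). map (\<lambda>(e, f). (e, f, d, b)) (\<Delta> c)) (\<Delta> a))) (\<Delta> x))"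

text \<open>The underlying commutative ring is the
type 'h (class comm_ring_1); scalar multiplication is sc; the coproduct is given by a function
\<Delta> choosing a representative formal sum \<Delta> x = \<Sum> x_1 \<otimes> x_2 of an element of H \<otimes> H;
\<epsilon> is the counit and S the antipode.\<close>
locale comm_hopf_algebra =
  fixes sc :: "'k::field \<Rightarrow> 'h::comm_ring_1 \<Rightarrow> 'h"
    and \<Delta> :: "'h \<Rightarrow> ('h \<times> 'h) list"
    and \<epsilon> :: "'h \<Rightarrow> 'k"
    and S :: "'h \<Rightarrow> 'h"
  assumes vs: "vector_space sc"
    and sc_mult: "\<And>c x y. sc c (x * y) = sc c x * y"
    and coprod_add: "\<And>x y. tensor2_eq sc (\<Delta> (x + y)) (\<Delta> x @ \<Delta> y)"
    and coprod_scale: "\<And>c x. tensor2_eq sc (\<Delta> (sc c x)) (map (\<lambda>(a, b). (sc c a, b)) (\<Delta> x))"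
    and coassoc: "\<And>x. tensor3_eq sc
        (concat (map (\<lambda>(a, b). map (\<lambda>(c, d). (c, d, b)) (\<Delta> a)) (\<Delta> x)))
        (concat (map (\<lambda>(a, b). map (\<lambda>(c, d). (a, c, d)) (\<Delta> b)) (\<Delta> x)))"
    and counit_linear: "Vector_Spaces.linear sc (*) \<epsilon>"
    and counit_left: "\<And>x. sum_list (map (\<lambda>(a, b). sc (\<epsilon> a) b) (\<Delta> x)) = x"
    and counit_right: "\<And>x. sum_list (map (\<lambda>(a, b). sc (\<epsilon> b) a) (\<Delta> x)) = x"
    and coprod_mult: "\<And>x y. tensor2_eq sc (\<Delta> (x * y))
        (concat (map (\<lambda>(a, b). map (\<lambda>(c, d). (a * c, b * d)) (\<Delta> y)) (\<Delta> x)))"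
    and coprod_one: "tensor2_eq sc (\<Delta> 1) [(1, 1)]"
    and counit_mult: "\<And>x y. \<epsilon> (x * y) = \<epsilon> x * \<epsilon> y"
    and counit_one: "\<epsilon> 1 = 1"
    and antipode_linear: "Vector_Spaces.linear sc sc S"
    and antipode_left: "\<And>x. sum_list (map (\<lambda>(a, b). S a * b) (\<Delta> x)) = sc (\<epsilon> x) 1"
    and antipode_right: "\<And>x. sum_list (map (\<lambda>(a, b). a * S b) (\<Delta> x)) = sc (\<epsilon> x) 1"

definition k_algebra_map :: "('k::field \<Rightarrow> 'h::comm_ring_1 \<Rightarrow> 'h) \<Rightarrow> ('h \<Rightarrow> 'h) \<Rightarrow> bool" where
  "k_algebra_map sc B \<longleftrightarrow> Vector_Spaces.linear sc sc B \<and> (\<forall>x y. B (x * y) = B x * B y) \<and> B 1 = 1"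

definition rota_baxter_cooperator ::
  "('k::field \<Rightarrow> 'h::comm_ring_1 \<Rightarrow> 'h) \<Rightarrow> ('h \<Rightarrow> ('h \<times> 'h) list) \<Rightarrow> ('h \<Rightarrow> 'h) \<Rightarrow> ('h \<Rightarrow> 'h) \<Rightarrow> bool" where
  "rota_baxter_cooperator sc \<Delta> S B \<longleftrightarrow> k_algebra_map sc B \<and>
     (\<forall>x. tensor2_eq sc
        (map (\<lambda>(a, b). (B a, B b)) (\<Delta> x))
        (map (\<lambda>(y1, y2, y3, y4). (y1 * B (y2 * S y4), y3)) (iter_coprod3 \<Delta> (B x))))"

end

theory Submission
  imports Defs
begin

text \<open>Applying \<open>\<epsilon> \<otimes> \<epsilon>\<close> to the defining identity of \<open>B\<close> and collapsing the counits on the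
right shows that the character \<open>f = \<epsilon> \<circ> B\<close> satisfies \<open>f \<star> f = (f \<star> (f \<circ> S)) \<circ> B = \<epsilon> \<circ> B = f\<close>
in the convolution algebra of linear forms on \<open>H\<close>.  Characters are invertible there, with
inverse \<open>f \<circ> S\<close>, so an idempotent character is the unit \<open>\<epsilon>\<close>.\<close>

lemma linear_sum_list_split:
  assumes "Vector_Spaces.linear s1 s2 g"
  shows "g (sum_list (map (\<lambda>(a, b). P a b) xs)) = sum_list (map (\<lambda>(a, b). g (P a b)) xs)"
proof -
  have "g 0 = 0"
    using assms unfolding Vector_Spaces.linear_iff by (metis add_cancel_right_right)
  then show ?thesis
    using assms by (induction xs) (auto simp: Vector_Spaces.linear_iff)
qed

lemma sum_list_map_concat:
  "sum_list (map f (concat xss)) = sum_list (map (\<lambda>xs. sum_list (map f xs)) xss)"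
  by (induction xss) auto

lemma linear_form_mult_const:
  assumes "Vector_Spaces.linear sc ((*) :: 'k::field \<Rightarrow> 'k \<Rightarrow> 'k) f"
  shows "Vector_Spaces.linear sc (*) (\<lambda>x. c * f x * d)"
  using assms by (simp add: Vector_Spaces.linear_iff algebra_simps)

lemma bilinear_form_mult:
  assumes "Vector_Spaces.linear sc ((*) :: 'k::field \<Rightarrow> 'k \<Rightarrow> 'k) f"
    and "Vector_Spaces.linear sc (*) g"
  shows "bilinear_form sc (\<lambda>a b. f a * g b)"
  using linear_form_mult_const[OF assms(1), of 1] linear_form_mult_const[OF assms(2), of _ 1]
  unfolding bilinear_form_def by simp

lemma trilinear_form_mult:
  assumes "Vector_Spaces.linear sc ((*) :: 'k::field \<Rightarrow> 'k \<Rightarrow> 'k) f"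
    and "Vector_Spaces.linear sc (*) g" and "Vector_Spaces.linear sc (*) h"
  shows "trilinear_form sc (\<lambda>a b c. f a * g b * h c)"
proof -
  have "Vector_Spaces.linear sc (*) (\<lambda>a. f a * g b * h c)" for b c
    using linear_form_mult_const[OF assms(1), of 1 "g b * h c"] by (simp add: mult.assoc)
  moreover have "Vector_Spaces.linear sc (*) (\<lambda>b. f a * g b * h c)" for a c
    using linear_form_mult_const[OF assms(2)] .
  moreover have "Vector_Spaces.linear sc (*) (\<lambda>c. f a * g b * h c)" for a b
    using linear_form_mult_const[OF assms(3), of "f a * g b" 1] by simp
  ultimately show ?thesis
    unfolding trilinear_form_def by blast
qed

lemma sum_list_iter_coprod3:
  "sum_list (map F (iter_coprod3 \<Delta> y)) =
   sum_list (map (\<lambda>(a, b). sum_list (map (\<lambda>(c, d).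
     sum_list (map (\<lambda>(e, g). F (e, g, d, b)) (\<Delta> c))) (\<Delta> a))) (\<Delta> y))"
  unfolding iter_coprod3_def by (simp add: sum_list_map_concat o_def split_def)

context comm_hopf_algebra
begin

text \<open>Convolution is computed on the chosen representative of \<open>\<Delta> x\<close>; it is independent of that
choice only for linear forms, which is why the lemmas below assume linearity.\<close>

definition convolution :: "('h \<Rightarrow> 'k) \<Rightarrow> ('h \<Rightarrow> 'k) \<Rightarrow> 'h \<Rightarrow> 'k"  (infixl \<open>\<star>\<close> 70) where
  "f \<star> g = (\<lambda>x. sum_list (map (\<lambda>(a, b). f a * g b) (\<Delta> x)))"

definition character :: "('h \<Rightarrow> 'k) \<Rightarrow> bool" where
  "character f \<longleftrightarrow> Vector_Spaces.linear sc (*) f \<and> (\<forall>x y. f (x * y) = f x * f y) \<and> f 1 = 1"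

lemma counit_character: "character \<epsilon>"
  unfolding character_def using counit_linear counit_mult counit_one by blast

lemma character_comp_algebra_map:
  assumes "character f" and "k_algebra_map sc B"
  shows "character (f \<circ> B)"
  using assms Vector_Spaces.linear_compose[of sc sc B "(*)" f]
  unfolding character_def k_algebra_map_def by simp

lemma linear_form_scale:
  assumes "Vector_Spaces.linear sc (*) f"
  shows "f (sc c x) = c * f x"
  using assms by (simp add: Vector_Spaces.linear_iff)

lemma convolution_counit_right:
  assumes "Vector_Spaces.linear sc (*) f"
  shows "f \<star> \<epsilon> = f"
proof
  fix x
  have "f x = f (sum_list (map (\<lambda>(a, b). sc (\<epsilon> b) a) (\<Delta> x)))"
    using counit_right by simp
  also have "\<dots> = (f \<star> \<epsilon>) x"
    unfolding convolution_def linear_sum_list_split[OF assms]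
    by (simp add: linear_form_scale[OF assms] mult.commute)
  finally show "(f \<star> \<epsilon>) x = f x" ..
qed

lemma convolution_counit_left:
  assumes "Vector_Spaces.linear sc (*) f"
  shows "\<epsilon> \<star> f = f"
proof
  fix x
  have "f x = f (sum_list (map (\<lambda>(a, b). sc (\<epsilon> a) b) (\<Delta> x)))"
    using counit_left by simp
  also have "\<dots> = (\<epsilon> \<star> f) x"
    unfolding convolution_def linear_sum_list_split[OF assms]
    by (simp add: linear_form_scale[OF assms])
  finally show "(\<epsilon> \<star> f) x = f x" ..
qed

lemma convolution_assoc:
  assumes "Vector_Spaces.linear sc (*) f" "Vector_Spaces.linear sc (*) g"
    "Vector_Spaces.linear sc (*) h"
  shows "(f \<star> g) \<star> h = f \<star> (g \<star> h)"
proof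
  fix x
  have "(f \<star> g \<star> h) x = sum_list (map (\<lambda>(a, b, c). f a * g b * h c)
      (concat (map (\<lambda>(a, b). map (\<lambda>(c, d). (c, d, b)) (\<Delta> a)) (\<Delta> x))))"
    by (simp add: convolution_def sum_list_map_concat o_def split_def sum_list_mult_const)
  also have "\<dots> = sum_list (map (\<lambda>(a, b, c). f a * g b * h c)
      (concat (map (\<lambda>(a, b). map (\<lambda>(c, d). (a, c, d)) (\<Delta> b)) (\<Delta> x))))"
    using coassoc[of x] trilinear_form_mult[OF assms] unfolding tensor3_eq_def by blast
  also have "\<dots> = (f \<star> (g \<star> h)) x"
    by (simp add: convolution_def sum_list_map_concat o_def split_def sum_list_const_mult
        mult.assoc)
  finally show "(f \<star> g \<star> h) x = (f \<star> (g \<star> h)) x" .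
qed

lemma character_convolution_antipode:
  assumes "character f"
  shows "f \<star> (f \<circ> S) = \<epsilon>"
proof
  fix x
  have lin: "Vector_Spaces.linear sc (*) f" and mult: "\<And>x y. f (x * y) = f x * f y"
    and one: "f 1 = 1"
    using assms unfolding character_def by auto
  have "(f \<star> (f \<circ> S)) x = f (sum_list (map (\<lambda>(a, b). a * S b) (\<Delta> x)))"
    unfolding convolution_def linear_sum_list_split[OF lin] by (simp add: mult)
  also have "\<dots> = \<epsilon> x"
    by (simp add: antipode_right linear_form_scale[OF lin] one)
  finally show "(f \<star> (f \<circ> S)) x = \<epsilon> x" .
qed

lemma idempotent_character_eq_counit:
  assumes "character f" and idem: "f \<star> f = f"
  shows "f = \<epsilon>"
proof -
  have lin: "Vector_Spaces.linear sc (*) f"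
    using assms(1) unfolding character_def by blast
  have lin_S: "Vector_Spaces.linear sc (*) (f \<circ> S)"
    using Vector_Spaces.linear_compose[OF antipode_linear lin] .
  have "f = f \<star> \<epsilon>"
    using convolution_counit_right[OF lin] by simp
  also have "\<dots> = f \<star> (f \<star> (f \<circ> S))"
    using character_convolution_antipode[OF assms(1)] by simp
  also have "\<dots> = (f \<star> f) \<star> (f \<circ> S)"
    using convolution_assoc[OF lin lin lin_S] by simp
  also have "\<dots> = \<epsilon>"
    using idem character_convolution_antipode[OF assms(1)] by simp
  finally show ?thesis .
qed

lemma sum_list_iter_coprod3_counit:
  assumes "Vector_Spaces.linear sc (*) f"
  shows "sum_list (map (\<lambda>(y1, y2, y3, y4). \<epsilon> y1 * f y2 * \<epsilon> y3 * h y4) (iter_coprod3 \<Delta> y))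
    = (f \<star> h) y"
proof -
  have counit_left': "sum_list (map (\<lambda>(a, b). \<epsilon> a * f b) (\<Delta> c)) = f c" for c
    using convolution_counit_left[OF assms] by (simp add: convolution_def fun_eq_iff)
  have counit_right': "sum_list (map (\<lambda>(a, b). f a * \<epsilon> b) (\<Delta> c)) = f c" for c
    using convolution_counit_right[OF assms] by (simp add: convolution_def fun_eq_iff)
  have "sum_list (map (\<lambda>(y1, y2, y3, y4). \<epsilon> y1 * f y2 * \<epsilon> y3 * h y4) (iter_coprod3 \<Delta> y)) =
    sum_list (map (\<lambda>(a, b). sum_list (map (\<lambda>(c, d).
      sum_list (map (\<lambda>(e, g). \<epsilon> e * f g) (\<Delta> c)) * \<epsilon> d) (\<Delta> a)) * h b) (\<Delta> y))"
    by (simp add: sum_list_iter_coprod3 split_def sum_list_mult_const)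
  also have "\<dots> = sum_list (map (\<lambda>(a, b).
      sum_list (map (\<lambda>(c, d). f c * \<epsilon> d) (\<Delta> a)) * h b) (\<Delta> y))"
    by (simp only: counit_left')
  also have "\<dots> = (f \<star> h) y"
    by (simp only: counit_right' convolution_def)
  finally show ?thesis .
qed

lemma rota_baxter_cooperator_counit_idempotent:
  assumes "rota_baxter_cooperator sc \<Delta> S B"
  shows "(\<epsilon> \<circ> B) \<star> (\<epsilon> \<circ> B) = \<epsilon> \<circ> B"
proof
  fix x
  define f where "f = \<epsilon> \<circ> B"
  have B: "k_algebra_map sc B" and rb: "tensor2_eq sc (map (\<lambda>(a, b). (B a, B b)) (\<Delta> x))
      (map (\<lambda>(y1, y2, y3, y4). (y1 * B (y2 * S y4), y3)) (iter_coprod3 \<Delta> (B x)))"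
    using assms unfolding rota_baxter_cooperator_def by auto
  have "character f"
    unfolding f_def by (rule character_comp_algebra_map[OF counit_character B])
  then have lin: "Vector_Spaces.linear sc (*) f" and mult: "\<And>x y. f (x * y) = f x * f y"
    unfolding character_def by auto
  have "(f \<star> f) x = sum_list (map (\<lambda>(a, b). \<epsilon> a * \<epsilon> b) (map (\<lambda>(a, b). (B a, B b)) (\<Delta> x)))"
    by (simp add: convolution_def f_def o_def split_def)
  also have "\<dots> = sum_list (map (\<lambda>(a, b). \<epsilon> a * \<epsilon> b)
      (map (\<lambda>(y1, y2, y3, y4). (y1 * B (y2 * S y4), y3)) (iter_coprod3 \<Delta> (B x))))"
    using rb bilinear_form_mult[OF counit_linear counit_linear] unfolding tensor2_eq_def by blast
  also have "\<dots> = sum_list (map (\<lambda>(y1, y2, y3, y4). \<epsilon> y1 * f y2 * \<epsilon> y3 * (f \<circ> S) y4)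
      (iter_coprod3 \<Delta> (B x)))"
    by (simp add: f_def counit_mult o_def split_def mult[unfolded f_def o_def] ac_simps)
  also have "\<dots> = (f \<star> (f \<circ> S)) (B x)"
    by (rule sum_list_iter_coprod3_counit[OF lin])
  also have "\<dots> = f x"
    using character_convolution_antipode[OF \<open>character f\<close>] by (simp add: f_def)
  finally show "((\<epsilon> \<circ> B) \<star> (\<epsilon> \<circ> B)) x = (\<epsilon> \<circ> B) x"
    by (simp add: f_def)
qed

end

theorem proposition3p2:
  fixes sc :: "'k::field \<Rightarrow> 'h::comm_ring_1 \<Rightarrow> 'h"
    and \<Delta> :: "'h \<Rightarrow> ('h \<times> 'h) list"
    and \<epsilon> :: "'h \<Rightarrow> 'k"
    and S B :: "'h \<Rightarrow> 'h"
  assumes "comm_hopf_algebra sc \<Delta> \<epsilon> S"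
    and "rota_baxter_cooperator sc \<Delta> S B"
  shows "\<epsilon> \<circ> B = \<epsilon>"
proof -
  interpret comm_hopf_algebra sc \<Delta> \<epsilon> S by fact
  have "k_algebra_map sc B"
    using assms(2) unfolding rota_baxter_cooperator_def by blast
  then have "character (\<epsilon> \<circ> B)"
    by (rule character_comp_algebra_map[OF counit_character])
  then show ?thesis
    by (rule idempotent_character_eq_counit[OF _ rota_baxter_cooperator_counit_idempotent[OF assms(2)]])
qed

end
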